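(* Let $k\ge2$, let $r_1,\dots,r_k$ be positive integers and let $a\le b$ be positive integers. Then \[ N_k(r_1,\dots,r_k;a)\,N_k(r_1,\dots,r_k;b)\le N_k^{(1)}(r_1,\dots,r_k;a,b)\,N_k^{(1)}(r_1,\dots,r_k;b,a). \]
   Context: $K(r_1,\dots,r_k)$ is the complete $k$-partite graph with parts $V_1,\dots,V_k$ of sizes $r_1,\dots,r_k$. $N_k(r_1,\dots,r_k;c)$ is the number of proper colourings of $K(r_1,\dots,r_k)$ with colours from a set of size $c$. Fix sets $A\subseteq B$ with $|A|=a$, $|B|=b$. $N_k^{(1)}(r_1,\dots,r_k;a,b)$ is the number of proper colourings of $K(r_1,\dots,r_k)$ in which $V_1$ receives colours from $A$ and $V_2,\dots,V_k$ receive colours from $B$; $N_k^{(1)}(r_1,\dots,r_k;b,a)$ is the number of proper colourings in which $V_1$ receives colours from $B$ and $V_2,\dots,V_k$ receive colours from $A$. *)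

theory Defs
  imports "HOL-Library.FuncSet"
begin

text \<open>The complete k-partite graph K(r_1,...,r_k): vertices are pairs (i,j) with
  i < k (part index; part i corresponds to V_(i+1)) and j < r i. Two vertices are
  adjacent iff they lie in different parts.\<close>

definition kp_vertices :: "nat \<Rightarrow> (nat \<Rightarrow> nat) \<Rightarrow> (nat \<times> nat) set" where
  "kp_vertices k r = {(i, j). i < k \<and> j < r i}"

definition kp_colourings ::
  "nat \<Rightarrow> (nat \<Rightarrow> nat) \<Rightarrow> (nat \<Rightarrow> 'c set) \<Rightarrow> ((nat \<times> nat) \<Rightarrow> 'c) set" where
  "kp_colourings k r C =
     {f \<in> kp_vertices k r \<rightarrow>\<^sub>E (\<Union>i<k. C i).
        (\<forall>v \<in> kp_vertices k r. f v \<in> C (fst v)) \<and>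
        (\<forall>v \<in> kp_vertices k r. \<forall>w \<in> kp_vertices k r. fst v \<noteq> fst w \<longrightarrow> f v \<noteq> f w)}"

definition N_k :: "nat \<Rightarrow> (nat \<Rightarrow> nat) \<Rightarrow> nat \<Rightarrow> nat" where
  "N_k k r c = card (kp_colourings k r (\<lambda>_. {0..<c}))"

definition N1_k :: "nat \<Rightarrow> (nat \<Rightarrow> nat) \<Rightarrow> 'c set \<Rightarrow> 'c set \<Rightarrow> nat" where
  "N1_k k r X Y = card (kp_colourings k r (\<lambda>i. if i = 0 then X else Y))"

end

(*
  Group the proper colourings by their colour classes (recorded as the equivalence relations
  they induce): a partition of V_1 into x classes and a partition of the other parts into
  y classes, each inside a single part.  If V_1 takes its
  colours from S and the other parts from T, then for S <= T the colourings with prescribed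
  classes number (|S|)_x (|T| - x)_y, with (c)_n the falling factorial, and for T <= S they
  number (|T|)_y (|S| - y)_x.

  Put h n = (a)_n / (b)_n and m n = (b)_n.  Then h is nonincreasing and submultiplicative and
  m is log-concave, so (a)_x (a - x)_y <= h x * h y * m (x + y), while (a)_x (b - x)_y =
  h x * m (x + y) and (b)_x (b - x)_y = m (x + y).  The theorem becomes a negative correlation
  inequality for h x and h y under the weights m (x + y), and symmetrising the fourfold sum
  writes the gap as a sum of the nonnegative terms
  (h x - h x') (h y - h y') (m (x + y') m (x' + y) - m (x + y) m (x' + y')).
*)
theory Submission
  imports Defs Complex_Main
begin

section \<open>Falling factorials\<close>

definition falling_fact :: "nat \<Rightarrow> nat \<Rightarrow> nat" where
  "falling_fact c n = (\<Prod>i = 0..<n. c - i)"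

lemma falling_fact_0 [simp]: "falling_fact c 0 = 1"
  by (simp add: falling_fact_def)

lemma falling_fact_Suc: "falling_fact c (Suc n) = falling_fact c n * (c - n)"
  by (simp add: falling_fact_def)

lemma falling_fact_add: "falling_fact c (m + n) = falling_fact c m * falling_fact (c - m) n"
  by (induction n) (simp_all add: falling_fact_Suc diff_diff_left)

lemma falling_fact_eq_0_iff: "falling_fact c n = 0 \<longleftrightarrow> c < n"
  by (auto simp: falling_fact_def)

lemma falling_fact_mono: "c \<le> c' \<Longrightarrow> falling_fact c n \<le> falling_fact c' n"
  unfolding falling_fact_def by (intro prod_mono) auto

lemma falling_fact_shift_le:
  assumes "a \<le> b"
  shows "falling_fact (a - x) y * falling_fact b y \<le> falling_fact a y * falling_fact (b - x) y"
proof -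
  have "(a - x - i) * (b - i) \<le> (a - i) * (b - x - i)" for i
  proof (cases "x + i < a")
    case True
    then obtain c where "a = x + i + c" by (metis less_imp_add_positive)
    moreover obtain e where "b = a + e" using assms by (metis le_iff_add)
    ultimately show ?thesis by (simp add: algebra_simps)
  qed simp
  then show ?thesis
    unfolding falling_fact_def prod.distrib[symmetric] by (intro prod_mono) simp
qed

lemma falling_fact_log_concave:
  assumes "x' \<le> x" "y' \<le> y"
  shows "falling_fact c (x + y) * falling_fact c (x' + y')
    \<le> falling_fact c (x + y') * falling_fact c (x' + y)"
proof -
  have "falling_fact c (x + y) = falling_fact c (x + y') * falling_fact (c - (x + y')) (y - y')"
    and "falling_fact c (x' + y) = falling_fact c (x' + y') * falling_fact (c - (x' + y')) (y - y')"
    using assms falling_fact_add[of c "_ + y'" "y - y'"] by simp_all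
  moreover have "falling_fact (c - (x + y')) (y - y') \<le> falling_fact (c - (x' + y')) (y - y')"
    using assms by (intro falling_fact_mono) simp
  ultimately show ?thesis
    by (simp add: mult_left_mono mult.left_commute)
qed

lemma card_inj_funcs:
  "finite A \<Longrightarrow> finite C \<Longrightarrow> card {f \<in> A \<rightarrow>\<^sub>E C. inj_on f A} = falling_fact (card C) (card A)"
  using card_inj_on_subset_funcset[of A C A] by (simp add: falling_fact_def)

(* For b < n the denominator (b)_n is 0, and the ratio is 0 since x / 0 = 0. *)
definition falling_ratio :: "nat \<Rightarrow> nat \<Rightarrow> nat \<Rightarrow> real" where
  "falling_ratio a b n = real (falling_fact a n) / real (falling_fact b n)"

lemma falling_ratio_nonneg: "0 \<le> falling_ratio a b n"
  by (simp add: falling_ratio_def)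

lemma falling_fact_eq_ratio_mult:
  assumes "a \<le> b"
  shows "real (falling_fact a n) = falling_ratio a b n * real (falling_fact b n)"
  using assms by (cases "b < n") (auto simp: falling_ratio_def falling_fact_eq_0_iff)

lemma falling_ratio_antimono:
  assumes "a \<le> b" "n \<le> n'"
  shows "falling_ratio a b n' \<le> falling_ratio a b n"
proof -
  have "falling_ratio a b (Suc n) \<le> falling_ratio a b n" for n
  proof (cases "n < b")
    case True
    then have "falling_ratio a b (Suc n) = falling_ratio a b n * (real (a - n) / real (b - n))"
      by (simp add: falling_ratio_def falling_fact_Suc)
    also have "\<dots> \<le> falling_ratio a b n"
      using True assms by (intro mult_left_le falling_ratio_nonneg) simp_all
    finally show ?thesis .
  qed (simp add: falling_ratio_def falling_fact_Suc)
  then show ?thesis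
    using assms(2) by (rule lift_Suc_antimono_le)
qed

lemma falling_ratio_submult:
  assumes "a \<le> b"
  shows "falling_ratio a b (x + y) \<le> falling_ratio a b x * falling_ratio a b y"
proof (cases "b < x + y")
  case True
  then have "falling_ratio a b (x + y) = 0"
    by (simp add: falling_ratio_def falling_fact_eq_0_iff)
  then show ?thesis
    by (simp add: falling_ratio_nonneg)
next
  case False
  then have pos: "0 < falling_fact b x" "0 < falling_fact b y" "0 < falling_fact (b - x) y"
    by (auto simp: zero_less_iff_neq_zero falling_fact_eq_0_iff)
  have "falling_ratio a b (x + y)
      = falling_ratio a b x * (real (falling_fact (a - x) y) / real (falling_fact (b - x) y))"
    by (simp add: falling_ratio_def falling_fact_add)
  also have "\<dots> \<le> falling_ratio a b x * falling_ratio a b y"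
    using pos falling_fact_shift_le[OF assms, of x y]
    by (intro mult_left_mono falling_ratio_nonneg)
      (simp add: falling_ratio_def divide_simps flip: of_nat_mult)
  finally show ?thesis .
qed

lemma falling_fact_correlation_term_nonneg:
  assumes "a \<le> b"
  shows "0 \<le> (falling_ratio a b x - falling_ratio a b x')
    * (falling_ratio a b y - falling_ratio a b y')
    * (real (falling_fact b (x + y')) * real (falling_fact b (x' + y))
       - real (falling_fact b (x + y)) * real (falling_fact b (x' + y')))"
proof -
  let ?h = "falling_ratio a b" and ?m = "\<lambda>n. real (falling_fact b n)"
  let ?E = "\<lambda>x x' y y'. (?h x - ?h x') * (?h y - ?h y')
    * (?m (x + y') * ?m (x' + y) - ?m (x + y) * ?m (x' + y'))"
  have "0 \<le> ?E x x' y y'" if "x' \<le> x" "y' \<le> y" for x x' y y'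
  proof -
    have "?h x \<le> ?h x'" "?h y \<le> ?h y'"
      using that falling_ratio_antimono[OF assms] by auto
    moreover have "?m (x + y) * ?m (x' + y') \<le> ?m (x + y') * ?m (x' + y)"
      using falling_fact_log_concave[OF that, of b] by (simp flip: of_nat_mult)
    ultimately show ?thesis
      by (intro mult_nonneg_nonneg mult_nonpos_nonpos) simp_all
  qed
  moreover have "?E x x' y y' = ?E x' x y y'" "?E x x' y y' = ?E x x' y' y" for x x' y y'
    by (simp_all add: algebra_simps)
  ultimately show ?thesis
    by (metis nat_le_linear)
qed

section \<open>A correlation inequality for double sums\<close>

lemma double_sum_negative_correlation:
  fixes g :: "'p \<Rightarrow> real" and h :: "'q \<Rightarrow> real" and M :: "'p \<Rightarrow> 'q \<Rightarrow> real"
  assumes "\<And>p p' q q'. p \<in> P \<Longrightarrow> p' \<in> P \<Longrightarrow> q \<in> Q \<Longrightarrow> q' \<in> Q \<Longrightarrow>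
    0 \<le> (g p - g p') * (h q - h q') * (M p q' * M p' q - M p q * M p' q')"
  shows "(\<Sum>p\<in>P. \<Sum>q\<in>Q. g p * h q * M p q) * (\<Sum>p\<in>P. \<Sum>q\<in>Q. M p q)
    \<le> (\<Sum>p\<in>P. \<Sum>q\<in>Q. g p * M p q) * (\<Sum>p\<in>P. \<Sum>q\<in>Q. h q * M p q)"
proof -
  define S4 :: "('p \<Rightarrow> 'q \<Rightarrow> 'p \<Rightarrow> 'q \<Rightarrow> real) \<Rightarrow> real"
    where "S4 F = (\<Sum>p\<in>P. \<Sum>q\<in>Q. \<Sum>p'\<in>P. \<Sum>q'\<in>Q. F p q p' q')" for F
  have S4_product: "(\<Sum>p\<in>P. \<Sum>q\<in>Q. u p q) * (\<Sum>p\<in>P. \<Sum>q\<in>Q. v p q) = S4 (\<lambda>p q p' q'. u p q * v p' q')"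
    for u v
    by (simp add: S4_def sum_distrib_right) (simp add: sum_distrib_left)
  have S4_regroup: "S4 F = (\<Sum>p\<in>P. \<Sum>p'\<in>P. \<Sum>q\<in>Q. \<Sum>q'\<in>Q. F p q p' q')" for F
    unfolding S4_def by (intro sum.cong refl sum.swap)
  have S4_swap_p: "S4 F = S4 (\<lambda>p q p' q'. F p' q p q')" for F
    unfolding S4_regroup by (rule sum.swap)
  have S4_swap_q: "S4 F = S4 (\<lambda>p q p' q'. F p q' p' q)" for F
    unfolding S4_regroup by (intro sum.cong refl sum.swap)
  define K where "K p q p' q' = M p q' * M p' q - M p q * M p' q'" for p q p' q'
  define G where "G p q p' q' = g p * h q * K p q p' q'" for p q p' q'
  have "(\<Sum>p\<in>P. \<Sum>q\<in>Q. g p * M p q) * (\<Sum>p\<in>P. \<Sum>q\<in>Q. h q * M p q)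
      - (\<Sum>p\<in>P. \<Sum>q\<in>Q. g p * h q * M p q) * (\<Sum>p\<in>P. \<Sum>q\<in>Q. M p q) = S4 G"
    unfolding S4_product
    by (subst S4_swap_q) (simp add: S4_def G_def K_def sum_subtractf algebra_simps)
  also have "\<dots> = (S4 G + S4 (\<lambda>p q p' q'. G p' q p q') + S4 (\<lambda>p q p' q'. G p q' p' q)
      + S4 (\<lambda>p q p' q'. G p' q' p q)) / 4"
    using S4_swap_p[of G] S4_swap_q[of G] S4_swap_q[of "\<lambda>p q p' q'. G p' q p q'"] by simp
  also have "\<dots> = S4 (\<lambda>p q p' q'. (g p - g p') * (h q - h q') * K p q p' q') / 4"
    by (simp add: S4_def G_def K_def sum.distrib[symmetric] algebra_simps)
  also have "\<dots> \<ge> 0"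
    unfolding S4_def K_def by (intro divide_nonneg_pos sum_nonneg assms) simp_all
  finally show ?thesis by simp
qed

lemma falling_fact_double_sum_inequality:
  fixes x :: "'p \<Rightarrow> nat" and y :: "'q \<Rightarrow> nat"
  assumes "a \<le> b"
  shows "(\<Sum>p\<in>P. \<Sum>q\<in>Q. falling_fact a (x p) * falling_fact (a - x p) (y q))
       * (\<Sum>p\<in>P. \<Sum>q\<in>Q. falling_fact b (x p) * falling_fact (b - x p) (y q))
    \<le> (\<Sum>p\<in>P. \<Sum>q\<in>Q. falling_fact a (x p) * falling_fact (b - x p) (y q))
       * (\<Sum>p\<in>P. \<Sum>q\<in>Q. falling_fact a (y q) * falling_fact (b - y q) (x p))"
proof -
  let ?h = "falling_ratio a b" and ?m = "\<lambda>n. real (falling_fact b n)"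
  have mixed: "real (falling_fact a u * falling_fact (b - u) v) = ?h u * ?m (u + v)" for u v
    using falling_fact_eq_ratio_mult[OF assms, of u] by (simp add: falling_fact_add)
  have pure: "real (falling_fact a u * falling_fact (a - u) v) \<le> ?h u * ?h v * ?m (u + v)" for u v
  proof -
    have "real (falling_fact a u * falling_fact (a - u) v) = ?h (u + v) * ?m (u + v)"
      using falling_fact_eq_ratio_mult[OF assms, of "u + v"] by (simp add: falling_fact_add)
    also have "\<dots> \<le> ?h u * ?h v * ?m (u + v)"
      using falling_ratio_submult[OF assms] by (intro mult_right_mono) simp_all
    finally show ?thesis .
  qed
  have "real ((\<Sum>p\<in>P. \<Sum>q\<in>Q. falling_fact a (x p) * falling_fact (a - x p) (y q))
       * (\<Sum>p\<in>P. \<Sum>q\<in>Q. falling_fact b (x p) * falling_fact (b - x p) (y q)))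
    = (\<Sum>p\<in>P. \<Sum>q\<in>Q. real (falling_fact a (x p) * falling_fact (a - x p) (y q)))
       * (\<Sum>p\<in>P. \<Sum>q\<in>Q. ?m (x p + y q))"
    unfolding of_nat_mult[of "sum _ _"] of_nat_sum by (simp add: falling_fact_add)
  also have "\<dots> \<le> (\<Sum>p\<in>P. \<Sum>q\<in>Q. ?h (x p) * ?h (y q) * ?m (x p + y q)) * (\<Sum>p\<in>P. \<Sum>q\<in>Q. ?m (x p + y q))"
    by (intro mult_right_mono sum_mono sum_nonneg pure) simp
  also have "\<dots> \<le> (\<Sum>p\<in>P. \<Sum>q\<in>Q. ?h (x p) * ?m (x p + y q)) * (\<Sum>p\<in>P. \<Sum>q\<in>Q. ?h (y q) * ?m (x p + y q))"
    by (intro double_sum_negative_correlation falling_fact_correlation_term_nonneg assms)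
  also have "\<dots> = real ((\<Sum>p\<in>P. \<Sum>q\<in>Q. falling_fact a (x p) * falling_fact (b - x p) (y q))
       * (\<Sum>p\<in>P. \<Sum>q\<in>Q. falling_fact a (y q) * falling_fact (b - y q) (x p)))"
    unfolding of_nat_mult[of "sum _ _"] of_nat_sum mixed by (simp add: add.commute)
  finally show ?thesis
    by (simp only: of_nat_le_iff)
qed

section \<open>Maps with prescribed kernel\<close>

definition kernel_on :: "'a set \<Rightarrow> ('a \<Rightarrow> 'b) \<Rightarrow> ('a \<times> 'a) set" where
  "kernel_on A f = kernel f \<inter> A \<times> A"

lemma equiv_kernel_on: "equiv A (kernel_on A f)"
  by (auto simp: kernel_on_def kernel_def equiv_def refl_on_def sym_def trans_def)

lemma kernel_on_Image: "v \<in> A \<Longrightarrow> kernel_on A f `` {v} = {w \<in> A. f w = f v}"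
  by (auto simp: kernel_on_def kernel_def)

lemma kernel_on_restrict: "kernel_on A (restrict f A) = kernel_on A f"
  by (auto simp: kernel_on_def kernel_def)

lemma the_elem_image_kernel_on_class:
  assumes "kernel_on A f = R" "v \<in> A"
  shows "the_elem (f ` (R `` {v})) = f v"
proof -
  have "f ` (R `` {v}) = {f v}"
    using kernel_on_Image[OF assms(2), of f] assms by force
  then show ?thesis
    by simp
qed

lemma card_image_eq_card_quotient_kernel_on: "card (f ` A) = card (A // kernel_on A f)"
proof -
  have "bij_betw (\<lambda>c. {v \<in> A. f v = c}) (f ` A) (A // kernel_on A f)"
    unfolding bij_betw_def inj_on_def quotient_def
    by (auto simp: kernel_on_Image)
  then show ?thesis
    by (rule bij_betw_same_card)
qed

lemma kernel_on_quotient_lift: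
  assumes "equiv A R" "inj_on \<phi> (A // R)"
  shows "kernel_on A (\<lambda>v\<in>A. \<phi> (R `` {v})) = R"
proof -
  have "(v, w) \<in> kernel_on A (\<lambda>v\<in>A. \<phi> (R `` {v})) \<longleftrightarrow> v \<in> A \<and> w \<in> A \<and> R `` {v} = R `` {w}"
    for v w
    using assms(2) by (auto simp: kernel_on_def kernel_def quotientI inj_on_eq_iff)
  then show ?thesis
    using equiv_class_eq_iff[OF assms(1)] by auto
qed

lemma quotient_lift_PiE: "\<phi> \<in> A // R \<rightarrow>\<^sub>E C \<Longrightarrow> (\<lambda>v\<in>A. \<phi> (R `` {v})) \<in> A \<rightarrow>\<^sub>E C"
  using PiE_mem[of \<phi> "A // R" "\<lambda>_. C", OF _ quotientI] by (simp add: restrict_PiE_iff)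

lemma quotient_unlift_PiE:
  assumes "f \<in> A \<rightarrow>\<^sub>E C" "kernel_on A f = R"
  shows "(\<lambda>X\<in>A // R. the_elem (f ` X)) \<in> A // R \<rightarrow>\<^sub>E C"
  unfolding restrict_PiE_iff
proof
  fix X assume "X \<in> A // R"
  then obtain v where "v \<in> A" "X = R `` {v}"
    by (rule quotientE)
  then show "the_elem (f ` X) \<in> C"
    using the_elem_image_kernel_on_class[OF assms(2)] PiE_mem[OF assms(1)] by simp
qed

lemma quotient_unlift_inj:
  assumes "equiv A R" "kernel_on A f = R"
  shows "inj_on (\<lambda>X. the_elem (f ` X)) (A // R)"
proof (rule inj_onI)
  fix X Y assume "X \<in> A // R" "Y \<in> A // R" and eq: "the_elem (f ` X) = the_elem (f ` Y)"
  then obtain v w where v: "v \<in> A" "X = R `` {v}" and w: "w \<in> A" "Y = R `` {w}"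
    by (metis quotientE)
  then have "(v, w) \<in> R"
    using eq the_elem_image_kernel_on_class[OF assms(2)] assms(2)
    by (auto simp: kernel_on_def kernel_def)
  then show "X = Y"
    using v(2) w(2) equiv_class_eq[OF assms(1)] by simp
qed

lemma bij_betw_quotient_lift:
  assumes R: "equiv A R"
  shows "bij_betw (\<lambda>\<phi>. \<lambda>v\<in>A. \<phi> (R `` {v}))
    {\<phi> \<in> A // R \<rightarrow>\<^sub>E C. inj_on \<phi> (A // R)} {f \<in> A \<rightarrow>\<^sub>E C. kernel_on A f = R}"
proof (rule bij_betw_byWitness[where f' = "\<lambda>f. \<lambda>X\<in>A // R. the_elem (f ` X)"];
    intro ballI image_subsetI; elim CollectE conjE)
  fix \<phi> assume \<phi>: "\<phi> \<in> A // R \<rightarrow>\<^sub>E C" "inj_on \<phi> (A // R)"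
  define f where "f = (\<lambda>v\<in>A. \<phi> (R `` {v}))"
  have kernel: "kernel_on A f = R"
    unfolding f_def using R \<phi>(2) by (rule kernel_on_quotient_lift)
  have "(\<lambda>X\<in>A // R. the_elem (f ` X)) X = \<phi> X" for X
  proof (cases "X \<in> A // R")
    case True
    then obtain v where "v \<in> A" "X = R `` {v}"
      by (rule quotientE)
    then show ?thesis
      using the_elem_image_kernel_on_class[OF kernel] True by (simp add: f_def)
  qed (use PiE_arb[OF \<phi>(1)] in simp)
  then show "(\<lambda>X\<in>A // R. the_elem (f ` X)) = \<phi>" ..
  show "f \<in> {f \<in> A \<rightarrow>\<^sub>E C. kernel_on A f = R}"
    using kernel quotient_lift_PiE[OF \<phi>(1)] by (simp add: f_def)
next
  fix f assume f: "f \<in> A \<rightarrow>\<^sub>E C" "kernel_on A f = R"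
  have "(\<lambda>v\<in>A. (\<lambda>X\<in>A // R. the_elem (f ` X)) (R `` {v})) v = f v" for v
    using PiE_arb[OF f(1), of v] the_elem_image_kernel_on_class[OF f(2), of v]
    by (cases "v \<in> A") (simp_all add: quotientI)
  then show "(\<lambda>v\<in>A. (\<lambda>X\<in>A // R. the_elem (f ` X)) (R `` {v})) = f" ..
  show "(\<lambda>X\<in>A // R. the_elem (f ` X)) \<in> {\<phi> \<in> A // R \<rightarrow>\<^sub>E C. inj_on \<phi> (A // R)}"
    using quotient_unlift_PiE[OF f] quotient_unlift_inj[OF R f(2)] by (simp add: inj_on_restrict_eq)
qed

lemma card_funcs_with_kernel:
  assumes "equiv A R" "finite A" "finite C"
  shows "card {f \<in> A \<rightarrow>\<^sub>E C. kernel_on A f = R} = falling_fact (card C) (card (A // R))"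
proof -
  have "card {f \<in> A \<rightarrow>\<^sub>E C. kernel_on A f = R} = card {\<phi> \<in> A // R \<rightarrow>\<^sub>E C. inj_on \<phi> (A // R)}"
    using bij_betw_quotient_lift[OF assms(1)] by (rule bij_betw_same_card[symmetric])
  also have "\<dots> = falling_fact (card C) (card (A // R))"
    using assms by (intro card_inj_funcs finite_quotient equiv_type)
  finally show ?thesis .
qed

definition kernel_pairs ::
  "'a set \<Rightarrow> ('a \<times> 'a) set \<Rightarrow> 'c set \<Rightarrow> 'b set \<Rightarrow> ('b \<times> 'b) set \<Rightarrow> 'c set \<Rightarrow> (('a \<Rightarrow> 'c) \<times> ('b \<Rightarrow> 'c)) set"
  where
  "kernel_pairs A R S B R' T = {(f, g). f \<in> A \<rightarrow>\<^sub>E S \<and> kernel_on A f = R \<and>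
     g \<in> B \<rightarrow>\<^sub>E T \<and> kernel_on B g = R' \<and> disjnt (f ` A) (g ` B)}"

lemma card_kernel_pairs_swap:
  "card (kernel_pairs A R S B R' T) = card (kernel_pairs B R' T A R S)"
proof -
  have "kernel_pairs A R S B R' T = prod.swap ` kernel_pairs B R' T A R S"
    by (auto simp: kernel_pairs_def disjnt_sym image_iff)
  then show ?thesis
    by (simp add: card_image)
qed

lemma card_kernel_pairs:
  assumes "S \<subseteq> T" "finite T" "finite A" "finite B" "equiv A R" "equiv B R'"
  shows "card (kernel_pairs A R S B R' T)
    = falling_fact (card S) (card (A // R))
      * falling_fact (card T - card (A // R)) (card (B // R'))"
proof -
  let ?F = "{f \<in> A \<rightarrow>\<^sub>E S. kernel_on A f = R}"
  let ?G = "\<lambda>f. {g \<in> B \<rightarrow>\<^sub>E T - f ` A. kernel_on B g = R'}"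
  have finite_S: "finite S"
    using assms(1,2) by (rule finite_subset)
  have "kernel_pairs A R S B R' T = Sigma ?F ?G"
    by (auto simp: kernel_pairs_def disjnt_def PiE_iff) (metis image_eqI)
  moreover have "card (?G f) = falling_fact (card T - card (A // R)) (card (B // R'))"
    if "f \<in> ?F" for f
  proof -
    have "f ` A \<subseteq> T"
      using that assms(1) by auto
    then have "card (T - f ` A) = card T - card (A // R)"
      using that assms(3) card_image_eq_card_quotient_kernel_on[of f A]
      by (simp add: card_Diff_subset)
    then show ?thesis
      using card_funcs_with_kernel[OF assms(6) assms(4), of "T - f ` A"] assms(2) by simp
  qed
  ultimately have "card (kernel_pairs A R S B R' T)
      = card ?F * falling_fact (card T - card (A // R)) (card (B // R'))"
    using assms(2-4) finite_S by (simp add: finite_PiE)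
  then show ?thesis
    using card_funcs_with_kernel[OF assms(5) assms(3) finite_S] by simp
qed

section \<open>Colourings of complete multipartite graphs\<close>

lemma finite_kp_vertices: "finite (kp_vertices k r)"
proof -
  have "kp_vertices k r = Sigma {..<k} (\<lambda>i. {..<r i})"
    by (auto simp: kp_vertices_def)
  then show ?thesis
    by simp
qed

lemma kp_colourings_eq:
  "kp_colourings k r C = {f \<in> Pi\<^sub>E (kp_vertices k r) (\<lambda>v. C (fst v)).
     \<forall>v \<in> kp_vertices k r. \<forall>w \<in> kp_vertices k r. fst v \<noteq> fst w \<longrightarrow> f v \<noteq> f w}"
  by (auto simp: kp_colourings_def kp_vertices_def PiE_iff)

definition first_part :: "nat \<Rightarrow> (nat \<Rightarrow> nat) \<Rightarrow> (nat \<times> nat) set" where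
  "first_part k r = {v \<in> kp_vertices k r. fst v = 0}"

definition other_parts :: "nat \<Rightarrow> (nat \<Rightarrow> nat) \<Rightarrow> (nat \<times> nat) set" where
  "other_parts k r = {v \<in> kp_vertices k r. fst v \<noteq> 0}"

lemma finite_first_part: "finite (first_part k r)"
  by (auto simp: first_part_def intro: finite_subset[OF _ finite_kp_vertices])

lemma finite_other_parts: "finite (other_parts k r)"
  by (auto simp: other_parts_def intro: finite_subset[OF _ finite_kp_vertices])

lemma kp_vertices_first_other_parts:
  "kp_vertices k r = first_part k r \<union> other_parts k r" "first_part k r \<inter> other_parts k r = {}"
  by (auto simp: first_part_def other_parts_def)

definition colouring_pairs ::
  "nat \<Rightarrow> (nat \<Rightarrow> nat) \<Rightarrow> 'c set \<Rightarrow> 'c set \<Rightarrow> (((nat \<times> nat) \<Rightarrow> 'c) \<times> ((nat \<times> nat) \<Rightarrow> 'c)) set"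
  where
  "colouring_pairs k r S T = {(f, g). f \<in> first_part k r \<rightarrow>\<^sub>E S \<and> g \<in> other_parts k r \<rightarrow>\<^sub>E T \<and>
     kernel_on (other_parts k r) g \<subseteq> {(v, w). fst v = fst w} \<and>
     disjnt (f ` first_part k r) (g ` other_parts k r)}"

lemma restrict_parts_in_colouring_pairs:
  assumes "f \<in> kp_colourings k r (\<lambda>i. if i = 0 then S else T)"
  shows "(restrict f (first_part k r), restrict f (other_parts k r)) \<in> colouring_pairs k r S T"
proof -
  let ?V1 = "first_part k r" and ?V2 = "other_parts k r"
  have f: "f \<in> Pi\<^sub>E (kp_vertices k r) (\<lambda>v. if fst v = 0 then S else T)"
    and proper: "\<And>v w. v \<in> kp_vertices k r \<Longrightarrow> w \<in> kp_vertices k r \<Longrightarrow> fst v \<noteq> fst w \<Longrightarrow> f v \<noteq> f w"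
    using assms by (auto simp: kp_colourings_eq)
  have "restrict f ?V1 \<in> ?V1 \<rightarrow>\<^sub>E S" "restrict f ?V2 \<in> ?V2 \<rightarrow>\<^sub>E T"
    unfolding restrict_PiE_iff using PiE_mem[OF f]
    by (fastforce simp: first_part_def other_parts_def)+
  moreover have "kernel_on ?V2 (restrict f ?V2) \<subseteq> {(v, w). fst v = fst w}"
    unfolding kernel_on_restrict using proper
    by (auto simp: kernel_on_def kernel_def other_parts_def)
  moreover have "disjnt (restrict f ?V1 ` ?V1) (restrict f ?V2 ` ?V2)"
    using proper by (auto simp: disjnt_def first_part_def other_parts_def)
  ultimately show ?thesis
    by (simp add: colouring_pairs_def)
qed

lemma join_colouring_pair_in_kp_colourings:
  assumes "(f, g) \<in> colouring_pairs k r S T"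
  shows "(\<lambda>v. if v \<in> first_part k r then f v else g v)
    \<in> kp_colourings k r (\<lambda>i. if i = 0 then S else T)"
    (is "?h \<in> _")
proof -
  let ?V = "kp_vertices k r" and ?V1 = "first_part k r" and ?V2 = "other_parts k r"
  have f: "f \<in> ?V1 \<rightarrow>\<^sub>E S" and g: "g \<in> ?V2 \<rightarrow>\<^sub>E T"
    and refines: "kernel_on ?V2 g \<subseteq> {(v, w). fst v = fst w}"
    and disjoint: "disjnt (f ` ?V1) (g ` ?V2)"
    using assms by (auto simp: colouring_pairs_def)
  have "?h \<in> Pi\<^sub>E ?V (\<lambda>v. if fst v = 0 then S else T)"
  proof (rule PiE_I)
    fix v assume "v \<in> ?V"
    then show "?h v \<in> (if fst v = 0 then S else T)"
      using PiE_mem[OF f, of v] PiE_mem[OF g, of v] by (auto simp: first_part_def other_parts_def)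
  next
    fix v assume "v \<notin> ?V"
    then show "?h v = undefined"
      using PiE_arb[OF g, of v] kp_vertices_first_other_parts(1)[of k r] by simp
  qed
  moreover have "?h v \<noteq> ?h w" if "v \<in> ?V" "w \<in> ?V" "fst v \<noteq> fst w" for v w
  proof -
    have "v \<in> ?V1 \<union> ?V2" "w \<in> ?V1 \<union> ?V2"
      using that(1,2) kp_vertices_first_other_parts(1)[of k r] by simp_all
    moreover have "v \<notin> ?V1 \<or> w \<notin> ?V1"
      using that(3) by (auto simp: first_part_def)
    ultimately consider "v \<in> ?V1" "w \<in> ?V2" | "v \<in> ?V2" "w \<in> ?V1" | "v \<in> ?V2" "w \<in> ?V2"
      by blast
    then show ?thesis
    proof cases
      case 1
      then show ?thesis
        using disjoint kp_vertices_first_other_parts(2)[of k r] by (auto simp: disjnt_iff)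
    next
      case 2
      then show ?thesis
        using disjoint kp_vertices_first_other_parts(2)[of k r] by (auto simp: disjnt_iff)
    next
      case 3
      then have "(v, w) \<notin> kernel_on ?V2 g"
        using refines that(3) by auto
      then show ?thesis
        using 3 kp_vertices_first_other_parts(2)[of k r] by (auto simp: kernel_on_def kernel_def)
    qed
  qed
  ultimately show ?thesis
    by (simp add: kp_colourings_eq)
qed

lemma card_kp_colourings_eq_card_colouring_pairs:
  "card (kp_colourings k r (\<lambda>i. if i = 0 then S else T)) = card (colouring_pairs k r S T)"
proof -
  let ?V1 = "first_part k r" and ?V2 = "other_parts k r"
  let ?join = "\<lambda>(f, g) v. if v \<in> ?V1 then f v else g v"
  have "bij_betw (\<lambda>f. (restrict f ?V1, restrict f ?V2))
      (kp_colourings k r (\<lambda>i. if i = 0 then S else T)) (colouring_pairs k r S T)"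
  proof (rule bij_betw_byWitness[where f' = ?join]; intro ballI image_subsetI)
    fix f assume f: "f \<in> kp_colourings k r (\<lambda>i. if i = 0 then S else T)"
    then have "f \<in> kp_vertices k r \<rightarrow>\<^sub>E (\<Union>i<k. if i = 0 then S else T)"
      by (simp add: kp_colourings_def)
    then show "?join (restrict f ?V1, restrict f ?V2) = f"
      using kp_vertices_first_other_parts(1)[of k r] by (auto simp: fun_eq_iff dest: PiE_arb)
    show "(restrict f ?V1, restrict f ?V2) \<in> colouring_pairs k r S T"
      using f by (rule restrict_parts_in_colouring_pairs)
  next
    fix fg assume fg: "fg \<in> colouring_pairs k r S T"
    then obtain f g where "fg = (f, g)" "f \<in> ?V1 \<rightarrow>\<^sub>E S" "g \<in> ?V2 \<rightarrow>\<^sub>E T"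
      by (auto simp: colouring_pairs_def)
    then show "(restrict (?join fg) ?V1, restrict (?join fg) ?V2) = fg"
      using kp_vertices_first_other_parts(2)[of k r] by (auto simp: fun_eq_iff dest: PiE_arb)
    show "?join fg \<in> kp_colourings k r (\<lambda>i. if i = 0 then S else T)"
      using fg join_colouring_pair_in_kp_colourings by (auto simp: \<open>fg = (f, g)\<close>)
  qed
  then show ?thesis
    by (rule bij_betw_same_card)
qed

definition part_refining_equivs :: "('i \<times> 'j) set \<Rightarrow> (('i \<times> 'j) \<times> ('i \<times> 'j)) set set" where
  "part_refining_equivs V = {R. equiv V R \<and> R \<subseteq> {(v, w). fst v = fst w}}"

lemma finite_equivs: "finite V \<Longrightarrow> finite {R. equiv V R}"
  by (rule finite_subset[of _ "Pow (V \<times> V)"]) (auto dest: equiv_type)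

lemma card_kp_colourings_eq_sum_kernel_pairs:
  assumes "finite S" "finite T"
  shows "card (kp_colourings k r (\<lambda>i. if i = 0 then S else T)) =
    (\<Sum>R \<in> {R. equiv (first_part k r) R}. \<Sum>R' \<in> part_refining_equivs (other_parts k r).
       card (kernel_pairs (first_part k r) R S (other_parts k r) R' T))"
proof -
  let ?V1 = "first_part k r" and ?V2 = "other_parts k r"
  let ?E1 = "{R. equiv ?V1 R}" and ?E2 = "part_refining_equivs ?V2"
  let ?P = "colouring_pairs k r S T"
  let ?kernels = "\<lambda>(f, g). (kernel_on ?V1 f, kernel_on ?V2 g)"
  note finite_parts = finite_first_part[of k r] finite_other_parts[of k r]
  have "?P \<subseteq> (?V1 \<rightarrow>\<^sub>E S) \<times> (?V2 \<rightarrow>\<^sub>E T)"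
    by (auto simp: colouring_pairs_def)
  then have "finite ?P"
    by (rule finite_subset) (use assms finite_parts in \<open>simp add: finite_PiE\<close>)
  moreover have "finite (?E1 \<times> ?E2)"
    using finite_equivs[OF finite_parts(1)] finite_equivs[OF finite_parts(2)]
    by (auto simp: part_refining_equivs_def intro: finite_subset[of ?E2])
  moreover have "?kernels ` ?P \<subseteq> ?E1 \<times> ?E2"
    by (auto simp: colouring_pairs_def part_refining_equivs_def equiv_kernel_on)
  ultimately have "card ?P = (\<Sum>RR' \<in> ?E1 \<times> ?E2. card {p \<in> ?P. ?kernels p = RR'})"
    unfolding card_eq_sum by (rule sum.group[symmetric])
  also have "\<dots> = (\<Sum>R \<in> ?E1. \<Sum>R' \<in> ?E2. card {p \<in> ?P. ?kernels p = (R, R')})"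
    unfolding sum.cartesian_product by (rule sum.cong) auto
  also have "\<dots> = (\<Sum>R \<in> ?E1. \<Sum>R' \<in> ?E2. card (kernel_pairs ?V1 R S ?V2 R' T))"
    by (intro sum.cong refl arg_cong[where f = card])
      (auto simp: colouring_pairs_def kernel_pairs_def part_refining_equivs_def)
  finally show ?thesis
    by (simp only: card_kp_colourings_eq_card_colouring_pairs)
qed

lemma card_kp_colourings_first_part_subset:
  assumes "S \<subseteq> T" "finite T"
  shows "card (kp_colourings k r (\<lambda>i. if i = 0 then S else T)) =
    (\<Sum>R \<in> {R. equiv (first_part k r) R}. \<Sum>R' \<in> part_refining_equivs (other_parts k r).
       falling_fact (card S) (card (first_part k r // R))
       * falling_fact (card T - card (first_part k r // R)) (card (other_parts k r // R')))"
proof -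
  have "finite S"
    using assms by (rule finite_subset)
  then show ?thesis
    using assms finite_first_part finite_other_parts
    by (simp add: card_kp_colourings_eq_sum_kernel_pairs card_kernel_pairs part_refining_equivs_def)
qed

lemma card_kp_colourings_first_part_superset:
  assumes "T \<subseteq> S" "finite S"
  shows "card (kp_colourings k r (\<lambda>i. if i = 0 then S else T)) =
    (\<Sum>R \<in> {R. equiv (first_part k r) R}. \<Sum>R' \<in> part_refining_equivs (other_parts k r).
       falling_fact (card T) (card (other_parts k r // R'))
       * falling_fact (card S - card (other_parts k r // R')) (card (first_part k r // R)))"
proof -
  have "finite T"
    using assms by (rule finite_subset)
  then show ?thesis
    using assms finite_first_part finite_other_parts
    by (simp add: card_kp_colourings_eq_sum_kernel_pairs card_kernel_pairs_swap[of "first_part k r"]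
        card_kernel_pairs part_refining_equivs_def)
qed

theorem lemma6p4:
  fixes k a b :: nat and r :: "nat \<Rightarrow> nat" and A B :: "'c set"
  assumes "k \<ge> 2"
    and "\<forall>i<k. r i > 0"
    and "0 < a" and "a \<le> b"
    and "A \<subseteq> B" and "finite B" and "card A = a" and "card B = b"
  shows "N_k k r a * N_k k r b \<le> N1_k k r A B * N1_k k r B A"
proof -
  let ?E1 = "{R. equiv (first_part k r) R}" and ?E2 = "part_refining_equivs (other_parts k r)"
  let ?x = "\<lambda>R. card (first_part k r // R)" and ?y = "\<lambda>R'. card (other_parts k r // R')"
  have "N_k k r c
      = (\<Sum>R\<in>?E1. \<Sum>R'\<in>?E2. falling_fact c (?x R) * falling_fact (c - ?x R) (?y R'))" for c
    using card_kp_colourings_first_part_subset[of "{0..<c}" "{0..<c}" k r] by (simp add: N_k_def)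
  moreover have "N1_k k r A B
      = (\<Sum>R\<in>?E1. \<Sum>R'\<in>?E2. falling_fact a (?x R) * falling_fact (b - ?x R) (?y R'))"
    using card_kp_colourings_first_part_subset[OF assms(5,6)] assms(7,8) by (simp add: N1_k_def)
  moreover have "N1_k k r B A
      = (\<Sum>R\<in>?E1. \<Sum>R'\<in>?E2. falling_fact a (?y R') * falling_fact (b - ?y R') (?x R))"
    using card_kp_colourings_first_part_superset[OF assms(5,6)] assms(7,8) by (simp add: N1_k_def)
  ultimately show ?thesis
    using falling_fact_double_sum_inequality[OF assms(4)] by simp
qed

end
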